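(* Let $X$ be an infinite-dimensional first-countable topological vector space over $\mathbb{K}$ ($\mathbb{K}=\mathbb{R}$ or $\mathbb{C}$). Then $w(X)\le\dim(X)$.
   Context: The weight $w(X)$ is the smallest cardinality of a base for the topology of $X$; $\dim(X)$ is the (Hamel) dimension of $X$. *)

theory Defs
  imports "HOL-Analysis.Analysis"
begin

text \<open>A topological vector space structure on the whole type 'a, with scalar field 'k
  (a real normed field, i.e. R or C up to isomorphism), scalar multiplication scand
  topology T on 'a.\<close>
definition tvs :: "('k::real_normed_field \<Rightarrow> 'a::ab_group_add \<Rightarrow> 'a) \<Rightarrow> 'a topology \<Rightarrow> bool" where
  "tvs sc T \<longleftrightarrow>
     vector_space sc \<and> topspace T = UNIV \<and>
     continuous_map (prod_topology T T) T (\<lambda>(x, y). x + y) \<and>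
     continuous_map (prod_topology (euclidean :: 'k topology) T) T (\<lambda>(c, x). sc c x)"

definition is_base :: "'a topology \<Rightarrow> 'a set set \<Rightarrow> bool" where
  "is_base T \<B> \<longleftrightarrow> (\<forall>V\<in>\<B>. openin T V) \<and>
     (\<forall>U x. openin T U \<and> x \<in> U \<longrightarrow> (\<exists>V\<in>\<B>. x \<in> V \<and> V \<subseteq> U))"

definition hamel_basis :: "('k::field \<Rightarrow> 'a::ab_group_add \<Rightarrow> 'a) \<Rightarrow> 'a set \<Rightarrow> bool" where
  "hamel_basis sc H \<longleftrightarrow> \<not> module.dependent sc H \<and> module.span sc H = UNIV"

end

theory Submission
  imports Defs "HOL-Computational_Algebra.Fundamental_Theorem_Algebra" "HOL-Library.Countable_Set_Type"
begin

text \<open>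
  If \<open>H\<close> is a Hamel basis and \<open>C\<close> a countable dense set of scalars, the finite sums of vectors
  \<open>c h\<close> with \<open>c \<in> C\<close>, \<open>h \<in> H\<close> form a dense set \<open>D\<close> of cardinality at most \<open>|H|\<close>, since \<open>H\<close>
  is infinite. Translating a countable neighbourhood base at \<open>0\<close> by the elements of \<open>D\<close>
  gives a base of the same cardinality.

  The scalar field is an arbitrary real normed field, so the existence of \<open>C\<close> needs an
  argument: by Ostrowski's method every element \<open>\<xi>\<close> is a root of a real quadratic
  \<open>(X - z)(X - conj z)\<close>, hence the field is \<open>\<real>\<close> or \<open>\<real> + \<real>j\<close> with \<open>j\<^sup>2 = -1\<close>.
\<close>

unbundle cardinal_syntax

section \<open>Real normed fields are separable\<close>

definition poly_real :: "real poly \<Rightarrow> 'a::{real_algebra_1,comm_ring_1} \<Rightarrow> 'a" where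
  "poly_real p x = poly (map_poly of_real p) x"

lemma poly_real_0 [simp]: "poly_real 0 x = 0"
  by (simp add: poly_real_def)

lemma poly_real_pCons [simp]: "poly_real (pCons a p) x = of_real a + x * poly_real p x"
  by (simp add: poly_real_def map_poly_pCons)

lemma map_poly_of_real_add: "map_poly of_real (p + q) = map_poly of_real p + map_poly of_real q"
  by (rule poly_eqI) (simp add: coeff_map_poly)

lemma map_poly_of_real_mult: "map_poly of_real (p * q) = map_poly of_real p * map_poly of_real q"
  by (rule poly_eqI) (simp add: coeff_map_poly coeff_mult)

lemma poly_real_add [simp]: "poly_real (p + q) x = poly_real p x + poly_real q x"
  by (simp add: poly_real_def map_poly_of_real_add)

lemma poly_real_mult [simp]: "poly_real (p * q) x = poly_real p x * poly_real q x"
  by (simp add: poly_real_def map_poly_of_real_mult)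

lemma poly_real_minus [simp]: "poly_real (- p) x = - poly_real p x"
  by (induction p) (simp_all add: algebra_simps)

lemma poly_real_diff [simp]: "poly_real (p - q) x = poly_real p x - poly_real q x"
  using poly_real_add[of p "- q" x] by simp

lemma poly_real_1 [simp]: "poly_real 1 x = 1"
  by (simp add: poly_real_def)

lemma poly_real_power [simp]: "poly_real (p ^ n) x = poly_real p x ^ n"
  by (induction n) simp_all

lemma poly_real_of_real: "poly_real p (of_real r) = of_real (poly p r)"
  by (induction p) simp_all

definition conj_pair_poly :: "complex \<Rightarrow> real poly" where
  "conj_pair_poly z = [:Re z ^ 2 + Im z ^ 2, - 2 * Re z, 1:]"

lemma degree_conj_pair_poly [simp]: "degree (conj_pair_poly z) = 2"
  by (simp add: conj_pair_poly_def)

lemma coeff_conj_pair_poly_2 [simp]: "coeff (conj_pair_poly z) 2 = 1"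
  by (simp add: conj_pair_poly_def numeral_2_eq_2)

lemma conj_pair_poly_nonzero [simp]: "conj_pair_poly z \<noteq> 0"
  by (simp add: conj_pair_poly_def)

lemma poly_real_conj_pair_poly:
  "poly_real (conj_pair_poly z) x = (x - of_real (Re z)) ^ 2 + of_real (Im z ^ 2)"
  by (simp add: conj_pair_poly_def power2_eq_square algebra_simps)

lemma poly_real_conj_pair_poly_root: "poly_real (conj_pair_poly z) z = 0"
  by (simp add: poly_real_conj_pair_poly complex_eq_iff power2_eq_square)

lemma conj_pair_poly_shift:
  assumes "0 \<le> e"
  shows "conj_pair_poly (Complex a (sqrt (b ^ 2 + e))) = conj_pair_poly (Complex a b) + [:e:]"
  using assms by (simp add: conj_pair_poly_def)

lemma real_poly_linear_or_conj_pair_factor: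
  fixes p :: "real poly"
  assumes "degree p \<noteq> 0"
  obtains r where "[:- r, 1:] dvd p" | z where "conj_pair_poly z dvd p"
proof -
  have "\<not> constant (poly (map_poly complex_of_real p))"
    using assms constant_degree by (metis degree_map_poly of_real_eq_0_iff)
  then obtain z :: complex where "poly_real p z = 0"
    using fundamental_theorem_of_algebra unfolding poly_real_def by blast
  show thesis
  proof (cases "Im z = 0")
    case True
    then have "z = of_real (Re z)"
      by (simp add: complex_eq_iff)
    then have "complex_of_real (poly p (Re z)) = 0"
      using \<open>poly_real p z = 0\<close> by (metis poly_real_of_real)
    then have "poly p (Re z) = 0"
      by simp
    then show thesis
      using that(1) poly_eq_0_iff_dvd by blast
  next
    case False
    define r where "r = p mod conj_pair_poly z"
    have "r = 0 \<or> degree r < 2"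
      using degree_mod_less[of "conj_pair_poly z" p] by (auto simp: r_def)
    then have "r = [:coeff r 0, coeff r 1:]"
      by (intro poly_eqI) (auto simp: coeff_pCons split: nat.split intro!: coeff_eq_0)
    then obtain a b where r_linear: "r = [:a, b:]"
      by blast
    have "p = conj_pair_poly z * (p div conj_pair_poly z) + r"
      by (simp add: r_def)
    then have "poly_real r z = 0"
      using \<open>poly_real p z = 0\<close> poly_real_conj_pair_poly_root
      by (metis poly_real_add poly_real_mult mult_zero_left add_0)
    then have "r = 0"
      using False by (auto simp: r_linear complex_eq_iff)
    then show thesis
      using that(2) by (simp add: r_def mod_eq_0_iff_dvd)
  qed
qed

lemma conj_pair_poly_monic_factor_norm_bound:
  fixes \<xi> :: "'k::real_normed_field"
  assumes min: "\<And>z. m \<le> norm (poly_real (conj_pair_poly z) \<xi>)"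
    and "0 \<le> m" and "degree p \<noteq> 0"
  obtains f g where "p = f * g" "lead_coeff f = 1" "degree f \<noteq> 0"
    "sqrt m ^ degree f \<le> norm (poly_real f \<xi>)"
  using \<open>degree p \<noteq> 0\<close>
proof (cases rule: real_poly_linear_or_conj_pair_factor)
  case (1 r)
  have "norm (\<xi> - of_real r) ^ 2 = norm (poly_real (conj_pair_poly (of_real r)) \<xi>)"
    by (simp add: poly_real_conj_pair_poly norm_power)
  then have "sqrt m \<le> norm (poly_real [:- r, 1:] \<xi>)"
    using min[of "of_real r"] by (intro real_le_lsqrt) auto
  with 1 that[of "[:- r, 1:]"] show thesis
    by (auto elim!: dvdE)
next
  case (2 z)
  have "sqrt m ^ degree (conj_pair_poly z) \<le> norm (poly_real (conj_pair_poly z) \<xi>)"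
    using min[of z] \<open>0 \<le> m\<close> by simp
  with 2 that[of "conj_pair_poly z"] show thesis
    by (auto elim!: dvdE)
qed

lemma norm_poly_real_lower_bound:
  fixes \<xi> :: "'k::real_normed_field"
  assumes min: "\<And>z. m \<le> norm (poly_real (conj_pair_poly z) \<xi>)" and "0 \<le> m"
  shows "\<bar>lead_coeff p\<bar> * sqrt m ^ degree p \<le> norm (poly_real p \<xi>)"
proof (induction "degree p" arbitrary: p rule: less_induct)
  case less
  show ?case
  proof (cases "degree p = 0")
    case True
    then show ?thesis
      by (auto elim: degree_eq_zeroE)
  next
    case False
    then obtain f g where fg: "p = f * g" "lead_coeff f = 1" "degree f \<noteq> 0"
      "sqrt m ^ degree f \<le> norm (poly_real f \<xi>)"
      using conj_pair_poly_monic_factor_norm_bound[OF min \<open>0 \<le> m\<close>] by metis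
    moreover from this False have "f \<noteq> 0" "g \<noteq> 0"
      by auto
    ultimately have deg: "degree p = degree f + degree g"
      by (simp add: degree_mult_eq)
    have lc: "lead_coeff p = lead_coeff g"
      using fg(1,2) by (metis lead_coeff_mult mult_1)
    have "\<bar>lead_coeff g\<bar> * sqrt m ^ degree g \<le> norm (poly_real g \<xi>)"
      using less.hyps[of g] deg fg(3) by simp
    with fg(4) have "sqrt m ^ degree f * (\<bar>lead_coeff g\<bar> * sqrt m ^ degree g)
        \<le> norm (poly_real f \<xi>) * norm (poly_real g \<xi>)"
      using \<open>0 \<le> m\<close> by (intro mult_mono) auto
    then show ?thesis
      using deg lc fg(1) by (simp add: norm_mult power_add mult_ac)
  qed
qed

text \<open>With \<open>g = conj_pair_poly z0\<close> attaining the minimum \<open>m\<close>, the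
  polynomial \<open>g + e\<close> divides \<open>g\<^sup>n - (-e)\<^sup>n\<close> with a monic quotient of degree \<open>2n - 2\<close>,
  whose value at \<open>\<xi>\<close> has norm at least \<open>m\<^sup>n\<^sup>-\<^sup>1\<close> by the previous lemma. Hence
  \<open>\<parallel>(g + e)(\<xi>)\<parallel> m\<^sup>n\<^sup>-\<^sup>1 \<le> m\<^sup>n + e\<^sup>n\<close>, and \<open>n \<rightarrow> \<infinity>\<close> gives \<open>\<parallel>(g + e)(\<xi>)\<parallel> \<le> m\<close>.\<close>

lemma norm_conj_pair_poly_shift_le:
  fixes \<xi> :: "'k::real_normed_field"
  assumes min: "\<And>z. m \<le> norm (poly_real (conj_pair_poly z) \<xi>)"
    and attained: "norm (poly_real (conj_pair_poly z0) \<xi>) = m"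
    and "0 < e" "e < m"
    and shift: "conj_pair_poly z1 = conj_pair_poly z0 + [:e:]"
  shows "norm (poly_real (conj_pair_poly z1) \<xi>) \<le> m"
proof -
  define g where "g = conj_pair_poly z0"
  define q where "q = conj_pair_poly z1"
  have bound: "norm (poly_real q \<xi>) * m ^ k \<le> m ^ Suc k + e ^ Suc k" for k
  proof -
    define G where "G = g ^ Suc k - [:- e:] ^ Suc k"
    define S where "S = (\<Sum>i<Suc k. [:- e:] ^ (k - i) * g ^ i)"
    have GS: "G = q * S"
      unfolding G_def S_def power_diff_sumr2 by (simp add: q_def g_def shift)
    have G: "G = [:- ((- e) ^ Suc k):] + g ^ Suc k"
      by (simp add: G_def poly_const_pow)
    have deg_g: "degree (g ^ Suc k) = 2 * Suc k"
      unfolding g_def by (subst degree_power_eq) simp_all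
    have const_lower: "degree [:- ((- e) ^ Suc k):] < degree (g ^ Suc k)"
      unfolding deg_g by simp
    then have deg_G: "degree G = 2 * Suc k"
      unfolding G deg_g[symmetric] by (rule degree_add_eq_right)
    have "lead_coeff G = lead_coeff (g ^ Suc k)"
      unfolding G using const_lower by (rule lead_coeff_add_le)
    also have "\<dots> = 1"
      by (simp only: lead_coeff_power) (simp add: g_def)
    finally have lc_G: "lead_coeff G = 1" .
    have "S \<noteq> 0"
      using GS deg_G by auto
    then have deg_S: "degree S = 2 * k"
      using deg_G GS by (simp add: degree_mult_eq q_def)
    have lc_S: "lead_coeff S = 1"
      using lc_G GS lead_coeff_mult[of q S] by (simp add: q_def)
    have "m ^ k \<le> norm (poly_real S \<xi>)"
      using norm_poly_real_lower_bound[OF min, of S] \<open>0 < e\<close> \<open>e < m\<close>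
      by (simp add: deg_S lc_S[unfolded deg_S] power_mult)
    then have "norm (poly_real q \<xi>) * m ^ k \<le> norm (poly_real G \<xi>)"
      by (simp add: GS norm_mult mult_left_mono)
    also have "poly_real G \<xi> = poly_real g \<xi> ^ Suc k - of_real (- e) ^ Suc k"
      by (simp add: G_def del: power_Suc)
    also have "norm \<dots> \<le> norm (poly_real g \<xi>) ^ Suc k + e ^ Suc k"
      using norm_triangle_ineq4 \<open>0 < e\<close> by (metis norm_power norm_of_real abs_minus_cancel abs_of_pos)
    finally show ?thesis
      using attained by (simp add: g_def)
  qed
  have "norm (poly_real q \<xi>) \<le> m + e * (e / m) ^ k" for k
    using bound[of k] \<open>0 < e\<close> \<open>e < m\<close> by (simp add: field_simps power_divide)
  moreover have "(\<lambda>k. m + e * (e / m) ^ k) \<longlonglongrightarrow> m + e * 0"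
    using \<open>0 < e\<close> \<open>e < m\<close> by (intro tendsto_intros) simp
  ultimately show ?thesis
    unfolding q_def by (simp add: LIMSEQ_le_const)
qed

lemma norm_poly_real_conj_pair_poly_coercive:
  fixes \<xi> :: "'k::real_normed_field"
  obtains R where "\<And>z. R < cmod z \<Longrightarrow> M < norm (poly_real (conj_pair_poly z) \<xi>)"
proof
  fix z
  define a where "a = norm \<xi>"
  assume "a + sqrt (\<bar>M\<bar> + 2 * a ^ 2) < cmod z"
  then have "sqrt (\<bar>M\<bar> + 2 * a ^ 2) ^ 2 < (cmod z - a) ^ 2"
    by (intro power_strict_mono) auto
  then have "M < cmod z ^ 2 - 2 * cmod z * a - a ^ 2"
    by (simp add: power2_eq_square algebra_simps)
  also have "\<dots> \<le> norm (poly_real (conj_pair_poly z) \<xi>)"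
  proof -
    have "poly_real (conj_pair_poly z) \<xi> = of_real (cmod z ^ 2) - (of_real (2 * Re z) * \<xi> - \<xi> ^ 2)"
      unfolding cmod_power2 by (simp add: conj_pair_poly_def power2_eq_square algebra_simps)
    moreover have "norm (of_real (cmod z ^ 2) :: 'k) = cmod z ^ 2"
      by (simp only: norm_of_real) simp
    ultimately have "cmod z ^ 2 - norm (of_real (2 * Re z) * \<xi> - \<xi> ^ 2) \<le> norm (poly_real (conj_pair_poly z) \<xi>)"
      by (metis norm_triangle_ineq2)
    moreover have "norm (of_real (2 * Re z) * \<xi> - \<xi> ^ 2) \<le> 2 * cmod z * a + a ^ 2"
      using norm_triangle_ineq4[of "of_real (2 * Re z) * \<xi>" "\<xi> ^ 2"] abs_Re_le_cmod[of z]
        mult_right_mono[of "\<bar>Re z\<bar>" "cmod z" a]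
      by (simp add: a_def norm_mult norm_power)
    ultimately show ?thesis
      by simp
  qed
  finally show "M < norm (poly_real (conj_pair_poly z) \<xi>)" .
qed

text \<open>Among the minimisers of \<open>z \<mapsto> \<parallel>conj_pair_poly z (\<xi>)\<parallel>\<close> pick one with maximal
  \<open>\<bar>Im z\<bar>\<close>; if the minimum were positive, the shift lemma would produce a minimiser
  with larger imaginary part.\<close>

lemma real_normed_field_conj_pair_root:
  fixes \<xi> :: "'k::real_normed_field"
  obtains z where "poly_real (conj_pair_poly z) \<xi> = 0"
proof -
  define F where "F z = norm (poly_real (conj_pair_poly z) \<xi>)" for z
  have contF: "continuous_on A F" for A
    unfolding F_def poly_real_conj_pair_poly by (intro continuous_intros)
  obtain R where R: "\<And>z. R < cmod z \<Longrightarrow> F 0 < F z"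
    using norm_poly_real_conj_pair_poly_coercive unfolding F_def by blast
  have "\<not> R < 0"
    using R[of 0] by auto
  then have "0 \<in> cball 0 R"
    by simp
  then obtain z0 where "z0 \<in> cball 0 R" and z0: "\<And>z. z \<in> cball 0 R \<Longrightarrow> F z0 \<le> F z"
    using continuous_attains_inf[OF compact_cball _ contF] by blast
  have min: "F z0 \<le> F z" for z
    using z0[of z] z0[of 0] R[of z] \<open>0 \<in> cball 0 R\<close> by force
  define m where "m = F z0"
  define M where "M = cball 0 R \<inter> {z. F z = m}"
  have "compact M"
    unfolding M_def by (intro compact_Int_closed compact_cball closed_Collect_eq contF continuous_on_const)
  moreover have "M \<noteq> {}"
    using \<open>z0 \<in> cball 0 R\<close> by (auto simp: M_def m_def)
  moreover have "continuous_on M (\<lambda>z. Im z ^ 2)"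
    by (intro continuous_intros)
  ultimately obtain z1 where "z1 \<in> M" and z1: "\<And>z. z \<in> M \<Longrightarrow> Im z ^ 2 \<le> Im z1 ^ 2"
    using continuous_attains_sup[of M "\<lambda>z. Im z ^ 2"] by blast
  show thesis
  proof (cases "m = 0")
    case True
    then show thesis
      using that[of z0] by (simp add: m_def F_def)
  next
    case False
    then have "0 < m"
      by (simp add: m_def F_def)
    define e where "e = m / 2"
    define z2 where "z2 = Complex (Re z1) (sqrt (Im z1 ^ 2 + e))"
    have "conj_pair_poly z2 = conj_pair_poly z1 + [:e:]"
      using conj_pair_poly_shift[of e "Re z1" "Im z1"] \<open>0 < m\<close> by (simp add: z2_def e_def)
    then have "F z2 \<le> m"
      using norm_conj_pair_poly_shift_le[of m \<xi> z1 e z2] min \<open>z1 \<in> M\<close> \<open>0 < m\<close>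
      by (simp add: F_def M_def m_def e_def)
    then have "z2 \<in> M"
      using min[of z2] R[of z2] min[of 0] by (force simp: M_def m_def)
    moreover have "Im z2 ^ 2 = Im z1 ^ 2 + e"
      using \<open>0 < m\<close> by (simp add: z2_def e_def)
    ultimately show thesis
      using z1 \<open>0 < m\<close> by (force simp: e_def)
  qed
qed

lemma real_normed_field_decompose:
  fixes \<xi> :: "'k::real_normed_field"
  obtains a b j where "\<xi> = of_real a + of_real b * j" "j = 0 \<or> j ^ 2 = -1"
proof -
  obtain z where "poly_real (conj_pair_poly z) \<xi> = 0"
    by (rule real_normed_field_conj_pair_root)
  then have sq: "(\<xi> - of_real (Re z)) ^ 2 = - of_real (Im z ^ 2)"
    by (simp add: poly_real_conj_pair_poly eq_neg_iff_add_eq_0)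
  show thesis
  proof (cases "Im z = 0")
    case True
    then show thesis
      using sq that[of "Re z" 0 0] by simp
  next
    case False
    define j where "j = (\<xi> - of_real (Re z)) / of_real (Im z)"
    have "j ^ 2 = -1"
      using sq False by (simp add: j_def power_divide)
    moreover have "\<xi> = of_real (Re z) + of_real (Im z) * j"
      using False by (simp add: j_def)
    ultimately show thesis
      using that by blast
  qed
qed

lemma separable_space_real_normed_field:
  "separable_space (euclidean :: 'k::real_normed_field topology)"
proof -
  define J where "J = {j :: 'k. j = 0 \<or> j ^ 2 = -1}"
  have "J \<subseteq> {x. poly [:0, 1, 0, 1:] x = 0}"
    by (auto simp: J_def power2_eq_square algebra_simps)
  then have "finite J"
    by (rule finite_subset) (rule poly_roots_finite, simp)
  define C where "C = (\<lambda>(a, b, j). of_real a + of_real b * j) ` (\<rat> \<times> \<rat> \<times> J)"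
  have "countable C"
    unfolding C_def using countable_rat \<open>finite J\<close>
    by (intro countable_image countable_SIGMA) (auto intro: countable_finite)
  moreover have "\<xi> \<in> closure C" for \<xi> :: 'k
    unfolding closure_approachable
  proof (intro allI impI)
    fix e :: real
    assume "0 < e"
    obtain a b j where \<xi>: "\<xi> = of_real a + of_real b * j" and "j = 0 \<or> j ^ 2 = -1"
      by (rule real_normed_field_decompose)
    then have "j \<in> J" and "norm j ^ 2 \<le> 1"
      by (auto simp: J_def simp flip: norm_power)
    then have "norm j \<le> 1"
      by (simp add: power_le_one_iff)
    obtain a' where "a' \<in> \<rat>" "a - e / 2 < a'" "a' < a + e / 2"
      using Rats_dense_in_real[of "a - e / 2" "a + e / 2"] \<open>0 < e\<close> by auto
    obtain b' where "b' \<in> \<rat>" "b - e / 2 < b'" "b' < b + e / 2"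
      using Rats_dense_in_real[of "b - e / 2" "b + e / 2"] \<open>0 < e\<close> by auto
    have "of_real a' + of_real b' * j \<in> C"
      using \<open>a' \<in> \<rat>\<close> \<open>b' \<in> \<rat>\<close> \<open>j \<in> J\<close> unfolding C_def by force
    moreover have "norm (of_real (a' - a) + of_real (b' - b) * j) \<le> \<bar>a' - a\<bar> + \<bar>b' - b\<bar>"
      using norm_triangle_ineq[of "of_real (a' - a)" "of_real (b' - b) * j"] \<open>norm j \<le> 1\<close>
        mult_left_le[of "norm j" "\<bar>b' - b\<bar>"]
      by (simp add: norm_mult del: of_real_diff)
    moreover have "\<bar>a' - a\<bar> + \<bar>b' - b\<bar> < e"
      using \<open>a - e / 2 < a'\<close> \<open>a' < a + e / 2\<close> \<open>b - e / 2 < b'\<close> \<open>b' < b + e / 2\<close> by linarith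
    ultimately show "\<exists>c\<in>C. dist c \<xi> < e"
      by (intro bexI[of _ "of_real a' + of_real b' * j"]) (auto simp: \<xi> dist_norm algebra_simps)
  qed
  ultimately show ?thesis
    unfolding separable_space_def by auto
qed

section \<open>Cardinality of lists\<close>

declare ordLeq_transitive [trans]

lemma card_of_Times_ordLeq_infinite:
  assumes "infinite C" "|A| \<le>o |C|" "|B| \<le>o |C|"
  shows "|A \<times> B| \<le>o |C|"
proof (rule card_of_Times_ordLeq_infinite_Field)
  show "infinite (Field (card_of C))"
    unfolding Field_card_of by (rule assms(1))
qed (use assms card_of_Card_order in auto)

lemma card_of_lists_length_ordLeq_infinite:
  assumes "infinite A"
  shows "|{xs \<in> lists A. length xs = n}| \<le>o |A|"
proof (induction n)
  case 0
  have "{xs \<in> lists A. length xs = 0} = {[]}"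
    by auto
  moreover have "A \<noteq> {}"
    using assms by auto
  ultimately show ?case
    using card_of_singl_ordLeq by metis
next
  case (Suc n)
  define L where "L = {xs \<in> lists A. length xs = n}"
  have "|(\<lambda>(x, xs). x # xs) ` (A \<times> L)| \<le>o |A \<times> L|"
    by (rule card_of_image)
  also have "|A \<times> L| \<le>o |A|"
    using assms card_of_mono1[OF order_refl] Suc.IH unfolding L_def
    by (rule card_of_Times_ordLeq_infinite)
  finally have "|(\<lambda>(x, xs). x # xs) ` (A \<times> L)| \<le>o |A|" .
  moreover have "{xs \<in> lists A. length xs = Suc n} = (\<lambda>(x, xs). x # xs) ` (A \<times> L)"
    by (auto simp: L_def image_iff length_Suc_conv)
  ultimately show ?case
    by (simp only:)
qed

lemma card_of_lists_ordLeq_infinite: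
  assumes "infinite A"
  shows "|lists A| \<le>o |A|"
proof -
  have "|UNIV :: nat set| \<le>o |A|"
    using assms by (simp add: infinite_iff_card_of_nat)
  then have "|\<Union>n. {xs \<in> lists A. length xs = n}| \<le>o |A|"
    using card_of_lists_length_ordLeq_infinite[OF assms]
    by (intro card_of_UNION_ordLeq_infinite[OF assms]) blast+
  moreover have "lists A = (\<Union>n. {xs \<in> lists A. length xs = n})"
    by auto
  ultimately show ?thesis
    by (simp only:)
qed

lemma countable_card_of_ordLeq_infinite:
  assumes "countable A" "infinite B"
  shows "|A| \<le>o |B|"
  using assms countable_card_of_nat infinite_iff_card_of_nat ordLeq_transitive by blast

lemma card_of_finite_sums_ordLeq:
  assumes "countable C" "C \<noteq> {}" "infinite H"
  shows "|sum_list ` lists ((\<lambda>(c, h). f c h) ` (C \<times> H))| \<le>o |H|"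
proof -
  have "infinite (C \<times> H)"
    using assms(2,3) by (auto dest: finite_cartesian_productD2)
  have "|sum_list ` lists ((\<lambda>(c, h). f c h) ` (C \<times> H))| \<le>o |lists (C \<times> H)|"
    unfolding lists_image image_comp by (rule card_of_image)
  also have "|lists (C \<times> H)| \<le>o |C \<times> H|"
    using \<open>infinite (C \<times> H)\<close> by (rule card_of_lists_ordLeq_infinite)
  also have "|C \<times> H| \<le>o |H|"
    using assms(3) countable_card_of_ordLeq_infinite[OF assms(1,3)] card_of_mono1[OF order_refl]
    by (rule card_of_Times_ordLeq_infinite)
  finally show ?thesis .
qed

section \<open>Dense sets and bases of topological vector spaces\<close>

lemma tvs_topspace [simp]:
  fixes sc :: "'k::real_normed_field \<Rightarrow> 'a::ab_group_add \<Rightarrow> 'a"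
  assumes "tvs sc T"
  shows "topspace T = UNIV"
  using assms by (simp add: tvs_def)

lemma tvs_vector_space:
  fixes sc :: "'k::real_normed_field \<Rightarrow> 'a::ab_group_add \<Rightarrow> 'a"
  assumes "tvs sc T"
  shows "vector_space sc"
  using assms by (simp add: tvs_def)

lemma continuous_map_tvs_add:
  fixes sc :: "'k::real_normed_field \<Rightarrow> 'a::ab_group_add \<Rightarrow> 'a"
  assumes "tvs sc T" "continuous_map X T f" "continuous_map X T g"
  shows "continuous_map X T (\<lambda>x. f x + g x)"
proof -
  have "continuous_map X T ((\<lambda>(x, y). x + y) \<circ> (\<lambda>x. (f x, g x)))"
    using assms by (intro continuous_map_compose[of _ "prod_topology T T"] continuous_map_pairedI)
      (simp_all add: tvs_def)
  then show ?thesis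
    by (simp add: o_def)
qed

lemma continuous_map_tvs_scale:
  fixes sc :: "'k::real_normed_field \<Rightarrow> 'a::ab_group_add \<Rightarrow> 'a"
  assumes "tvs sc T" "continuous_map X euclidean f" "continuous_map X T g"
  shows "continuous_map X T (\<lambda>x. sc (f x) (g x))"
proof -
  have "continuous_map X T ((\<lambda>(c, x). sc c x) \<circ> (\<lambda>x. (f x, g x)))"
    using assms by (intro continuous_map_compose[of _ "prod_topology euclidean T"] continuous_map_pairedI)
      (simp_all add: tvs_def)
  then show ?thesis
    by (simp add: o_def)
qed

lemma continuous_map_tvs_uminus:
  fixes sc :: "'k::real_normed_field \<Rightarrow> 'a::ab_group_add \<Rightarrow> 'a"
  assumes "tvs sc T" "continuous_map X T g"
  shows "continuous_map X T (\<lambda>x. - g x)"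
proof -
  interpret vector_space sc
    using tvs_vector_space[OF assms(1)] .
  have "continuous_map X T (\<lambda>x. sc (- 1) (g x))"
    using continuous_map_tvs_scale[OF assms(1) _ assms(2), of "\<lambda>_. - 1"] by simp
  then show ?thesis
    by (simp add: scale_minus_left)
qed

lemma tvs_openin_translation:
  fixes sc :: "'k::real_normed_field \<Rightarrow> 'a::ab_group_add \<Rightarrow> 'a"
  assumes "tvs sc T" "openin T V"
  shows "openin T ((+) d ` V)"
proof -
  have "(+) d ` V = {y \<in> topspace T. y + - d \<in> V}"
    using assms(1) by (force simp: image_iff algebra_simps)
  moreover have "continuous_map T T (\<lambda>y. y + - d)"
    using assms(1) by (intro continuous_map_tvs_add[OF assms(1)]) simp_all
  ultimately show ?thesis
    using openin_continuous_map_preimage assms(2) by metis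
qed

lemma tvs_difference_nhd:
  fixes sc :: "'k::real_normed_field \<Rightarrow> 'a::ab_group_add \<Rightarrow> 'a"
  assumes "tvs sc T" "openin T U" "x \<in> U"
  obtains W where "openin T W" "0 \<in> W" "\<And>a b. a \<in> W \<Longrightarrow> b \<in> W \<Longrightarrow> x + a - b \<in> U"
proof -
  define P where "P = {p \<in> topspace (prod_topology T T). x + fst p + - snd p \<in> U}"
  have "continuous_map (prod_topology T T) T (\<lambda>p. x + fst p + - snd p)"
    using assms(1)
    by (intro continuous_map_tvs_add[OF assms(1)] continuous_map_tvs_uminus[OF assms(1)]
        continuous_map_fst continuous_map_snd) simp
  then have "openin (prod_topology T T) P"
    unfolding P_def using assms(2) by (intro openin_continuous_map_preimage) auto
  then have "\<forall>a b. (a, b) \<in> P \<longrightarrow>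
      (\<exists>W1 W2. openin T W1 \<and> openin T W2 \<and> a \<in> W1 \<and> b \<in> W2 \<and> W1 \<times> W2 \<subseteq> P)"
    by (simp only: openin_prod_topology_alt)
  moreover have "(0, 0) \<in> P"
    using assms(1,3) by (simp add: P_def)
  ultimately obtain W1 W2 where "openin T W1" "openin T W2" "0 \<in> W1" "0 \<in> W2" "W1 \<times> W2 \<subseteq> P"
    by meson
  then show thesis
    by (intro that[of "W1 \<inter> W2"]) (auto simp: P_def)
qed

lemma tvs_is_base_translates:
  fixes sc :: "'k::real_normed_field \<Rightarrow> 'a::ab_group_add \<Rightarrow> 'a"
  assumes "tvs sc T" and closure_D: "T closure_of D = UNIV"
    and open_B: "\<And>V. V \<in> B \<Longrightarrow> openin T V"
    and local_base: "\<And>U. openin T U \<Longrightarrow> 0 \<in> U \<Longrightarrow> \<exists>V\<in>B. 0 \<in> V \<and> V \<subseteq> U"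
  shows "is_base T ((\<lambda>(d, V). (+) d ` V) ` (D \<times> B))"
  unfolding is_base_def
proof (intro conjI ballI allI impI)
  fix W
  assume "W \<in> (\<lambda>(d, V). (+) d ` V) ` (D \<times> B)"
  then show "openin T W"
    using tvs_openin_translation[OF assms(1)] open_B by auto
next
  fix U x
  assume "openin T U \<and> x \<in> U"
  then obtain W where "openin T W" "0 \<in> W" and W: "\<And>a b. a \<in> W \<Longrightarrow> b \<in> W \<Longrightarrow> x + a - b \<in> U"
    using tvs_difference_nhd[OF assms(1)] by blast
  then obtain V where "V \<in> B" "0 \<in> V" "V \<subseteq> W"
    using local_base by blast
  have "continuous_map T T (\<lambda>y. x + - y)"
    using assms(1)
    by (intro continuous_map_tvs_add[OF assms(1)] continuous_map_tvs_uminus[OF assms(1)]) simp_all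
  then have "openin T {y \<in> topspace T. x + - y \<in> V}"
    using openin_continuous_map_preimage open_B \<open>V \<in> B\<close> by metis
  moreover have "x \<in> {y \<in> topspace T. x + - y \<in> V}"
    using \<open>0 \<in> V\<close> assms(1) by simp
  moreover have "x \<in> T closure_of D"
    using closure_D by blast
  ultimately have "\<exists>d. d \<in> D \<and> d \<in> {y \<in> topspace T. x + - y \<in> V}"
    by (meson in_closure_of)
  then obtain d where "d \<in> D" "x + - d \<in> V"
    by blast
  then have "x - d \<in> V"
    by simp
  have "(+) d ` V \<subseteq> U"
  proof
    fix y
    assume "y \<in> (+) d ` V"
    then obtain v where "v \<in> V" "y = d + v"
      by blast
    then show "y \<in> U"
      using W[of v "x - d"] \<open>V \<subseteq> W\<close> \<open>x - d \<in> V\<close> by (auto simp: algebra_simps)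
  qed
  moreover have "x \<in> (+) d ` V"
    using \<open>x - d \<in> V\<close> by (force simp: image_iff)
  ultimately show "\<exists>W\<in>(\<lambda>(d, V). (+) d ` V) ` (D \<times> B). x \<in> W \<and> W \<subseteq> U"
    using \<open>d \<in> D\<close> \<open>V \<in> B\<close> by blast
qed

lemma tvs_closure_of_add_closed:
  fixes sc :: "'k::real_normed_field \<Rightarrow> 'a::ab_group_add \<Rightarrow> 'a"
  assumes "tvs sc T" "\<And>x y. x \<in> D \<Longrightarrow> y \<in> D \<Longrightarrow> x + y \<in> D"
    and "x \<in> T closure_of D" "y \<in> T closure_of D"
  shows "x + y \<in> T closure_of D"
proof -
  have "continuous_map (prod_topology T T) T (\<lambda>(x, y). x + y)"
    using assms(1) by (simp add: tvs_def)
  then have "(\<lambda>(x, y). x + y) ` (prod_topology T T closure_of (D \<times> D))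
      \<subseteq> T closure_of ((\<lambda>(x, y). x + y) ` (D \<times> D))"
    by (rule continuous_map_image_closure_subset)
  also have "\<dots> \<subseteq> T closure_of D"
    using assms(2) by (intro closure_of_mono) auto
  finally show ?thesis
    using assms(3,4) by (auto simp: closure_of_Times)
qed

lemma tvs_closure_of_scale:
  fixes sc :: "'k::real_normed_field \<Rightarrow> 'a::ab_group_add \<Rightarrow> 'a"
  assumes "tvs sc T" "closure C = UNIV" "(\<lambda>c. sc c h) ` C \<subseteq> D"
  shows "sc c h \<in> T closure_of D"
proof -
  have "continuous_map euclidean T (\<lambda>c. sc c h)"
    using assms(1) by (intro continuous_map_tvs_scale[OF assms(1)]) simp_all
  then have "(\<lambda>c. sc c h) ` (euclidean closure_of C) \<subseteq> T closure_of ((\<lambda>c. sc c h) ` C)"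
    by (rule continuous_map_image_closure_subset)
  also have "\<dots> \<subseteq> T closure_of D"
    using assms(3) by (rule closure_of_mono)
  finally show ?thesis
    using assms(2) by auto
qed

lemma tvs_closure_of_finite_sums:
  fixes sc :: "'k::real_normed_field \<Rightarrow> 'a::ab_group_add \<Rightarrow> 'a"
  assumes "tvs sc T" "closure C = UNIV" "module.span sc H = UNIV"
  shows "T closure_of (sum_list ` lists ((\<lambda>(c, h). sc c h) ` (C \<times> H))) = UNIV"
proof -
  interpret vector_space sc
    using tvs_vector_space[OF assms(1)] .
  define D where "D = sum_list ` lists ((\<lambda>(c, h). sc c h) ` (C \<times> H))"
  have add_D: "x + y \<in> D" if xy: "x \<in> D" "y \<in> D" for x y
  proof -
    obtain xs ys where "xs \<in> lists ((\<lambda>(c, h). sc c h) ` (C \<times> H))"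
      "ys \<in> lists ((\<lambda>(c, h). sc c h) ` (C \<times> H))" "x = sum_list xs" "y = sum_list ys"
      using xy unfolding D_def by blast
    then show ?thesis
      unfolding D_def by (intro image_eqI[of _ _ "xs @ ys"]) auto
  qed
  have "x \<in> T closure_of D" for x
  proof -
    have "x \<in> span H"
      using assms(3) by simp
    then show ?thesis
    proof (induction rule: span_induct_alt)
      case base
      have "0 \<in> D"
        unfolding D_def by (intro image_eqI[of _ _ "[]"]) auto
      then show ?case
        using closure_of_subset[of D T] assms(1) by auto
    next
      case (step c h y)
      have "(\<lambda>c. sc c h) ` C \<subseteq> D"
        using \<open>h \<in> H\<close> unfolding D_def by (auto intro!: image_eqI[of _ _ "[sc _ h]"])
      then have "sc c h \<in> T closure_of D"
        by (rule tvs_closure_of_scale[OF assms(1,2)])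
      then show ?case
        using tvs_closure_of_add_closed[OF assms(1) add_D] step.IH by blast
    qed
  qed
  then show ?thesis
    unfolding D_def by blast
qed

lemma tvs_first_countable_base_ordLeq:
  fixes sc :: "'k::real_normed_field \<Rightarrow> 'a::ab_group_add \<Rightarrow> 'a"
  assumes "tvs sc T" "first_countable T" "T closure_of D = UNIV" "infinite K" "|D| \<le>o |K|"
  shows "\<exists>\<B>. is_base T \<B> \<and> |\<B>| \<le>o |K|"
proof -
  obtain B where "countable B" "\<And>V. V \<in> B \<Longrightarrow> openin T V"
    "\<And>U. openin T U \<Longrightarrow> 0 \<in> U \<Longrightarrow> \<exists>V\<in>B. 0 \<in> V \<and> V \<subseteq> U"
    using assms(2) tvs_topspace[OF assms(1)] unfolding first_countable_def by (metis UNIV_I)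
  then have "is_base T ((\<lambda>(d, V). (+) d ` V) ` (D \<times> B))"
    by (intro tvs_is_base_translates[OF assms(1,3)])
  moreover have "|D \<times> B| \<le>o |K|"
    using assms(4,5) countable_card_of_ordLeq_infinite[OF \<open>countable B\<close> assms(4)]
    by (rule card_of_Times_ordLeq_infinite)
  then have "|(\<lambda>(d, V). (+) d ` V) ` (D \<times> B)| \<le>o |K|"
    by (rule ordLeq_transitive[OF card_of_image])
  ultimately show ?thesis
    by blast
qed

theorem theorem3p6:
  fixes sc :: "'k::real_normed_field \<Rightarrow> 'a::ab_group_add \<Rightarrow> 'a"
    and T :: "'a topology"
  assumes "tvs sc T"
    and "first_countable T"
    and "\<not> (\<exists>S. finite S \<and> module.span sc S = UNIV)"
    and "hamel_basis sc H"
  shows "\<exists>\<B>. is_base T \<B> \<and> (card_of \<B>, card_of H) \<in> ordLeq"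
proof -
  have span_H: "module.span sc H = UNIV"
    using assms(4) by (simp add: hamel_basis_def)
  with assms(3) have "infinite H"
    by blast
  obtain C :: "'k set" where "countable C" "closure C = UNIV"
    using separable_space_real_normed_field unfolding separable_space_def by auto
  define D where "D = sum_list ` lists ((\<lambda>(c, h). sc c h) ` (C \<times> H))"
  have "T closure_of D = UNIV"
    unfolding D_def using tvs_closure_of_finite_sums[OF assms(1) \<open>closure C = UNIV\<close> span_H] .
  moreover have "|D| \<le>o |H|"
    unfolding D_def using \<open>countable C\<close> \<open>closure C = UNIV\<close> \<open>infinite H\<close>
    by (intro card_of_finite_sums_ordLeq) auto
  ultimately show ?thesis
    using tvs_first_countable_base_ordLeq[OF assms(1,2) _ \<open>infinite H\<close>] by blast
qed

end
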